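(* In the algebra $\mathcal O_q$ defined in the context, the element $\tilde{\mathcal G}_1+qB_\delta$ is central, where $B_\delta=q^{-2}\mathcal W_1\mathcal W_0-\mathcal W_0\mathcal W_1$.
   Context: All algebras are associative and unital over a field $\mathbb F$; $q\in\mathbb F$ is nonzero and not a root of unity. For elements $X,Y$ of an algebra, $[X,Y]=XY-YX$ and $[X,Y]_q=qXY-q^{-1}YX$. Let $\rho=-(q^2-q^{-2})^2$. The algebra $\mathcal O_q$ is defined by generators $\mathcal W_{-k},\mathcal W_{k+1},\mathcal G_{k+1},\tilde{\mathcal G}_{k+1}$ ($k\in\mathbb N$) and the following relations for all $k,\ell\in\mathbb N$: $[\mathcal W_0,\mathcal W_{k+1}]=[\mathcal W_{-k},\mathcal W_1]=(\tilde{\mathcal G}_{k+1}-\mathcal G_{k+1})/(q+q^{-1})$; $[\mathcal W_0,\mathcal G_{k+1}]_q=[\tilde{\mathcal G}_{k+1},\mathcal W_0]_q=\rho\mathcal W_{-k-1}-\rho\mathcal W_{k+1}$; $[\mathcal G_{k+1},\mathcal W_1]_q=[\mathcal W_1,\tilde{\mathcal G}_{k+1}]_q=\rho\mathcal W_{k+2}-\rho\mathcal W_{-k}$; $[\mathcal W_{-k},\mathcal W_{-\ell}]=0$, $[\mathcal W_{k+1},\mathcal W_{\ell+1}]=0$; $[\mathcal W_{-k},\mathcal W_{\ell+1}]+[\mathcal W_{k+1},\mathcal W_{-\ell}]=0$; $[\mathcal W_{-k},\mathcal G_{\ell+1}]+[\mathcal G_{k+1},\mathcal W_{-\ell}]=0$;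 $[\mathcal W_{-k},\tilde{\mathcal G}_{\ell+1}]+[\tilde{\mathcal G}_{k+1},\mathcal W_{-\ell}]=0$; $[\mathcal W_{k+1},\mathcal G_{\ell+1}]+[\mathcal G_{k+1},\mathcal W_{\ell+1}]=0$; $[\mathcal W_{k+1},\tilde{\mathcal G}_{\ell+1}]+[\tilde{\mathcal G}_{k+1},\mathcal W_{\ell+1}]=0$; $[\mathcal G_{k+1},\mathcal G_{\ell+1}]=0$, $[\tilde{\mathcal G}_{k+1},\tilde{\mathcal G}_{\ell+1}]=0$; $[\tilde{\mathcal G}_{k+1},\mathcal G_{\ell+1}]+[\mathcal G_{k+1},\tilde{\mathcal G}_{\ell+1}]=0$. *)

theory Defs
  imports Main
begin

text \<open>An F-algebra A is modelled as a ring A (type class ring_1) together with a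
  unital ring homomorphism phi from the field F into the centre of A (scalars act via phi).
  The algebra O_q is presented by generators and relations; a statement about O_q is
  rendered via its universal property: for every F-algebra A and every family of elements
  of A satisfying the defining relations, the claimed property holds in the subalgebra of
  A generated by these elements.  Indexing: Wm k = W_{-k}, Wp k = W_{k+1},
  G k = G_{k+1}, Gt k = tilde G_{k+1}.\<close>

definition central_field_hom :: "('f::field \<Rightarrow> 'a::ring_1) \<Rightarrow> bool" where
  "central_field_hom phi \<longleftrightarrow>
     (\<forall>a b. phi (a + b) = phi a + phi b) \<and> (\<forall>a b. phi (a * b) = phi a * phi b) \<and>
     phi 1 = 1 \<and> (\<forall>c x. phi c * x = x * phi c)"

definition comm :: "'a::ring_1 \<Rightarrow> 'a \<Rightarrow> 'a" where
  "comm x y = x * y - y * x"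

definition qcomm :: "('f::field \<Rightarrow> 'a::ring_1) \<Rightarrow> 'f \<Rightarrow> 'a \<Rightarrow> 'a \<Rightarrow> 'a" where
  "qcomm phi q x y = phi q * x * y - phi (inverse q) * y * x"

definition rho :: "'f::field \<Rightarrow> 'f" where
  "rho q = - ((q ^ 2 - (inverse q) ^ 2) ^ 2)"

definition Oq_relations ::
  "('f::field \<Rightarrow> 'a::ring_1) \<Rightarrow> 'f \<Rightarrow> (nat \<Rightarrow> 'a) \<Rightarrow> (nat \<Rightarrow> 'a) \<Rightarrow> (nat \<Rightarrow> 'a) \<Rightarrow> (nat \<Rightarrow> 'a) \<Rightarrow> bool"
where
  "Oq_relations phi q Wm Wp G Gt \<longleftrightarrow>
    (\<forall>k. comm (Wm 0) (Wp k) = phi (inverse (q + inverse q)) * (Gt k - G k)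
        \<and> comm (Wm k) (Wp 0) = phi (inverse (q + inverse q)) * (Gt k - G k)) \<and>
    (\<forall>k. qcomm phi q (Wm 0) (G k) = phi (rho q) * Wm (Suc k) - phi (rho q) * Wp k
        \<and> qcomm phi q (Gt k) (Wm 0) = phi (rho q) * Wm (Suc k) - phi (rho q) * Wp k) \<and>
    (\<forall>k. qcomm phi q (G k) (Wp 0) = phi (rho q) * Wp (Suc k) - phi (rho q) * Wm k
        \<and> qcomm phi q (Wp 0) (Gt k) = phi (rho q) * Wp (Suc k) - phi (rho q) * Wm k) \<and>
    (\<forall>k l. comm (Wm k) (Wm l) = 0 \<and> comm (Wp k) (Wp l) = 0) \<and>
    (\<forall>k l. comm (Wm k) (Wp l) + comm (Wp k) (Wm l) = 0) \<and>
    (\<forall>k l. comm (Wm k) (G l) + comm (G k) (Wm l) = 0) \<and>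
    (\<forall>k l. comm (Wm k) (Gt l) + comm (Gt k) (Wm l) = 0) \<and>
    (\<forall>k l. comm (Wp k) (G l) + comm (G k) (Wp l) = 0) \<and>
    (\<forall>k l. comm (Wp k) (Gt l) + comm (Gt k) (Wp l) = 0) \<and>
    (\<forall>k l. comm (G k) (G l) = 0 \<and> comm (Gt k) (Gt l) = 0) \<and>
    (\<forall>k l. comm (Gt k) (G l) + comm (G k) (Gt l) = 0)"

inductive_set gen_subalg ::
  "('f::field \<Rightarrow> 'a::ring_1) \<Rightarrow> (nat \<Rightarrow> 'a) \<Rightarrow> (nat \<Rightarrow> 'a) \<Rightarrow> (nat \<Rightarrow> 'a) \<Rightarrow> (nat \<Rightarrow> 'a) \<Rightarrow> 'a set"
  for phi Wm Wp G Gt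
where
  scal: "phi c \<in> gen_subalg phi Wm Wp G Gt"
| gWm: "Wm k \<in> gen_subalg phi Wm Wp G Gt"
| gWp: "Wp k \<in> gen_subalg phi Wm Wp G Gt"
| gG: "G k \<in> gen_subalg phi Wm Wp G Gt"
| gGt: "Gt k \<in> gen_subalg phi Wm Wp G Gt"
| add: "x \<in> gen_subalg phi Wm Wp G Gt \<Longrightarrow> y \<in> gen_subalg phi Wm Wp G Gt \<Longrightarrow> x + y \<in> gen_subalg phi Wm Wp G Gt"
| mult: "x \<in> gen_subalg phi Wm Wp G Gt \<Longrightarrow> y \<in> gen_subalg phi Wm Wp G Gt \<Longrightarrow> x * y \<in> gen_subalg phi Wm Wp G Gt"

end

theory Submission
  imports Defs
begin

text \<open>Write \<open>Z = Gt\<^sub>1 - [W\<^sub>0, W\<^sub>1]\<^sub>q\<close>, which equals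
  \<open>Gt\<^sub>1 + q B\<^sub>\<delta>\<close>. Its centralizer is a subalgebra containing the scalars, so it
  suffices that \<open>Z\<close> commutes with every generator. For \<open>W\<^sub>-\<^sub>k\<close> and
  \<open>W\<^sub>k\<^sub>+\<^sub>1\<close> the Leibniz rule for \<open>[X, [W\<^sub>0, W\<^sub>1]\<^sub>q]\<close> and the
  relations reduce this to \<open>[U, V]\<^sub>q - [V, U]\<^sub>q = (q + q\<^sup>-\<^sup>1) [U, V]\<close>. For
  \<open>Gt\<^sub>k\<^sub>+\<^sub>1\<close> the q-Jacobi identity
  \<open>[[V, U]\<^sub>q, X] = [V, [U, X]\<^sub>q] + [U, [X, V]\<^sub>q]\<close> reduces it to the commutativity
  relations among the \<open>W\<close>'s. Finally \<open>G\<^sub>k\<^sub>+\<^sub>1 = Gt\<^sub>k\<^sub>+\<^sub>1 - (q + q\<^sup>-\<^sup>1) [W\<^sub>0, W\<^sub>k\<^sub>+\<^sub>1]\<close>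
  lies in the centralizer as well.\<close>

lemma central_field_homD:
  assumes "central_field_hom phi"
  shows central_field_hom_add: "phi (a + b) = phi a + phi b"
    and central_field_hom_mult: "phi (a * b) = phi a * phi b"
    and central_field_hom_one: "phi 1 = 1"
    and central_field_hom_commute: "phi c * x = x * phi c"
  using assms unfolding central_field_hom_def by blast+

lemma central_field_hom_left_commute:
  assumes "central_field_hom phi"
  shows "x * (phi c * y) = phi c * (x * y)"
  by (metis assms central_field_hom_commute mult.assoc)

lemmas central_field_hom_simps =
  central_field_hom_commute[symmetric] central_field_hom_left_commute

lemma central_field_hom_inverse_cancel:
  assumes "central_field_hom phi" and "a \<noteq> 0"
  shows "phi (inverse a) * phi a = 1"
  by (metis assms central_field_hom_mult central_field_hom_one left_inverse)

lemma comm_swap: "comm y x = - comm x y"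
  by (simp add: comm_def)

lemma comm_diff_right: "comm x (y - w) = comm x y - comm x w"
  by (simp add: comm_def algebra_simps)

lemma qcomm_zero_left [simp]: "qcomm phi q 0 v = 0"
  by (simp add: qcomm_def)

lemma qcomm_zero_right [simp]: "qcomm phi q u 0 = 0"
  by (simp add: qcomm_def)

lemma qcomm_diff_left: "qcomm phi q (u - u') v = qcomm phi q u v - qcomm phi q u' v"
  by (simp add: qcomm_def algebra_simps)

lemma qcomm_diff_right: "qcomm phi q u (v - v') = qcomm phi q u v - qcomm phi q u v'"
  by (simp add: qcomm_def algebra_simps)

lemma qcomm_scale_left:
  assumes "central_field_hom phi"
  shows "qcomm phi q (phi c * u) v = phi c * qcomm phi q u v"
proof -
  have "phi a * (phi c * u) * v = phi c * (phi a * u * v)"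
    and "phi a * v * (phi c * u) = phi c * (phi a * v * u)" for a
    by (metis assms central_field_hom_commute mult.assoc)+
  then show ?thesis
    by (simp add: qcomm_def right_diff_distrib)
qed

lemma qcomm_scale_right:
  assumes "central_field_hom phi"
  shows "qcomm phi q u (phi c * v) = phi c * qcomm phi q u v"
proof -
  have "phi a * u * (phi c * v) = phi c * (phi a * u * v)"
    and "phi a * (phi c * v) * u = phi c * (phi a * v * u)" for a
    by (metis assms central_field_hom_commute mult.assoc)+
  then show ?thesis
    by (simp add: qcomm_def right_diff_distrib)
qed

lemma comm_qcomm_right:
  assumes "central_field_hom phi"
  shows "comm x (qcomm phi q u v) = qcomm phi q (comm x u) v + qcomm phi q u (comm x v)"
  by (simp add: comm_def qcomm_def algebra_simps central_field_hom_simps[OF assms])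

lemma qcomm_diff_qcomm:
  assumes "central_field_hom phi"
  shows "qcomm phi q u v - qcomm phi q v u = phi (q + inverse q) * comm u v"
  by (simp add: comm_def qcomm_def algebra_simps central_field_hom_simps[OF assms]
      central_field_hom_add[OF assms])

lemma comm_qcomm_jacobi:
  assumes "central_field_hom phi"
  shows "comm (qcomm phi q v u) x = comm v (qcomm phi q u x) + comm u (qcomm phi q x v)"
  by (simp add: comm_def qcomm_def algebra_simps central_field_hom_simps[OF assms])

definition centralizer :: "'a::ring_1 \<Rightarrow> 'a set" where
  "centralizer z = {x. z * x = x * z}"

lemma centralizer_iff_comm: "x \<in> centralizer z \<longleftrightarrow> comm x z = 0"
  by (auto simp: centralizer_def comm_def)

lemma centralizer_add: "x \<in> centralizer z \<Longrightarrow> y \<in> centralizer z \<Longrightarrow> x + y \<in> centralizer z"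
  by (simp add: centralizer_def algebra_simps)

lemma centralizer_diff: "x \<in> centralizer z \<Longrightarrow> y \<in> centralizer z \<Longrightarrow> x - y \<in> centralizer z"
  by (simp add: centralizer_def algebra_simps)

lemma centralizer_mult: "x \<in> centralizer z \<Longrightarrow> y \<in> centralizer z \<Longrightarrow> x * y \<in> centralizer z"
  by (simp add: centralizer_def) (metis mult.assoc)

lemma gen_subalg_subset:
  assumes "\<And>c. phi c \<in> S"
    and "\<And>k. Wm k \<in> S" and "\<And>k. Wp k \<in> S" and "\<And>k. G k \<in> S" and "\<And>k. Gt k \<in> S"
    and "\<And>x y. x \<in> S \<Longrightarrow> y \<in> S \<Longrightarrow> x + y \<in> S"
    and "\<And>x y. x \<in> S \<Longrightarrow> y \<in> S \<Longrightarrow> x * y \<in> S"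
  shows "gen_subalg phi Wm Wp G Gt \<subseteq> S"
proof
  fix x assume "x \<in> gen_subalg phi Wm Wp G Gt"
  then show "x \<in> S" by (induction rule: gen_subalg.induct) (use assms in auto)
qed

lemma add_inverse_eq_0_iff:
  fixes q :: "'f::field"
  assumes "q \<noteq> 0"
  shows "q + inverse q = 0 \<longleftrightarrow> q ^ 2 = -1"
proof -
  have "q * (q + inverse q) = q ^ 2 + 1"
    using assms by (simp add: distrib_left power2_eq_square)
  then have "q + inverse q = 0 \<longleftrightarrow> q ^ 2 + 1 = 0"
    using assms by (metis mult_eq_0_iff)
  then show ?thesis
    by (simp add: eq_neg_iff_add_eq_0)
qed

locale Oq_rep =
  fixes phi :: "'f::field \<Rightarrow> 'a::ring_1" and q :: 'f and Wm Wp G Gt :: "nat \<Rightarrow> 'a"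
  assumes hom: "central_field_hom phi"
    and q_nonzero: "q \<noteq> 0"
    and q_add_inverse_nonzero: "q + inverse q \<noteq> 0"
    and relations: "Oq_relations phi q Wm Wp G Gt"
begin

lemma
  shows comm_Wm0_Wp: "comm (Wm 0) (Wp k) = phi (inverse (q + inverse q)) * (Gt k - G k)"
    and comm_Wm_Wp0: "comm (Wm k) (Wp 0) = phi (inverse (q + inverse q)) * (Gt k - G k)"
    and qcomm_Wm0_G: "qcomm phi q (Wm 0) (G k) = qcomm phi q (Gt k) (Wm 0)"
    and qcomm_G_Wp0: "qcomm phi q (G k) (Wp 0) = qcomm phi q (Wp 0) (Gt k)"
    and qcomm_Gt_Wm0: "qcomm phi q (Gt k) (Wm 0) = phi (rho q) * Wm (Suc k) - phi (rho q) * Wp k"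
    and qcomm_Wp0_Gt: "qcomm phi q (Wp 0) (Gt k) = phi (rho q) * Wp (Suc k) - phi (rho q) * Wm k"
    and comm_Wm_Wm: "comm (Wm k) (Wm l) = 0"
    and comm_Wp_Wp: "comm (Wp k) (Wp l) = 0"
    and comm_Wm_Wp_swap: "comm (Wm k) (Wp l) + comm (Wp k) (Wm l) = 0"
    and comm_Wm_Gt_swap: "comm (Wm k) (Gt l) + comm (Gt k) (Wm l) = 0"
    and comm_Wp_Gt_swap: "comm (Wp k) (Gt l) + comm (Gt k) (Wp l) = 0"
    and comm_Gt_Gt: "comm (Gt k) (Gt l) = 0"
  using relations unfolding Oq_relations_def by simp_all

lemma inverse_scalar_cancel: "phi (inverse (q + inverse q)) * phi (q + inverse q) = 1"
  using central_field_hom_inverse_cancel[OF hom q_add_inverse_nonzero] .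

definition Z :: 'a where
  "Z = Gt 0 - qcomm phi q (Wm 0) (Wp 0)"

lemma Z_eq: "Gt 0 + phi q * (phi (inverse q ^ 2) * Wp 0 * Wm 0 - Wm 0 * Wp 0) = Z"
proof -
  have "q * inverse q ^ 2 = inverse q"
    using q_nonzero by (simp add: power2_eq_square)
  then have "phi q * (phi (inverse q ^ 2) * x) = phi (inverse q) * x" for x
    by (metis central_field_hom_mult[OF hom] mult.assoc)
  then show ?thesis
    by (simp add: Z_def qcomm_def algebra_simps)
qed

lemma comm_Wm_Z: "comm (Wm k) Z = 0"
proof -
  let ?c = "phi (inverse (q + inverse q))"
  have "comm (Wm k) Z = comm (Wm 0) (Gt k) - ?c * (qcomm phi q (Wm 0) (Gt k) - qcomm phi q (Wm 0) (G k))"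
    using comm_Wm_Gt_swap[of k 0] comm_Wm_Wm[of k 0]
    by (simp add: Z_def comm_diff_right comm_qcomm_right[OF hom] comm_Wm_Wp0 qcomm_diff_right
        qcomm_scale_right[OF hom] comm_swap[of "Gt k"] eq_neg_iff_add_eq_0[symmetric])
  also have "\<dots> = comm (Wm 0) (Gt k) - ?c * phi (q + inverse q) * comm (Wm 0) (Gt k)"
    by (simp add: qcomm_Wm0_G qcomm_diff_qcomm[OF hom] mult.assoc)
  also have "\<dots> = 0"
    by (simp add: inverse_scalar_cancel)
  finally show ?thesis .
qed

lemma comm_Wp_Z: "comm (Wp k) Z = 0"
proof -
  let ?c = "phi (inverse (q + inverse q))"
  have "comm (Wp k) (Wm 0) = ?c * (G k - Gt k)"
    using comm_Wm0_Wp[of k] by (simp add: comm_swap[of "Wp k"] algebra_simps)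
  then have "comm (Wp k) Z = comm (Wp 0) (Gt k) - ?c * (qcomm phi q (G k) (Wp 0) - qcomm phi q (Gt k) (Wp 0))"
    using comm_Wp_Gt_swap[of k 0] comm_Wp_Wp[of k 0]
    by (simp add: Z_def comm_diff_right comm_qcomm_right[OF hom] qcomm_diff_left
        qcomm_scale_left[OF hom] comm_swap[of "Gt k"] eq_neg_iff_add_eq_0[symmetric])
  also have "\<dots> = comm (Wp 0) (Gt k) - ?c * phi (q + inverse q) * comm (Wp 0) (Gt k)"
    by (simp add: qcomm_G_Wp0 qcomm_diff_qcomm[OF hom] mult.assoc)
  also have "\<dots> = 0"
    by (simp add: inverse_scalar_cancel)
  finally show ?thesis .
qed

lemma comm_Gt_Z: "comm (Gt k) Z = 0"
proof -
  have "comm (Gt k) Z = comm (qcomm phi q (Wm 0) (Wp 0)) (Gt k)"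
    using comm_Gt_Gt[of k 0] by (simp add: Z_def comm_diff_right comm_swap[of "Gt k"])
  also have "\<dots> = comm (Wm 0) (qcomm phi q (Wp 0) (Gt k)) + comm (Wp 0) (qcomm phi q (Gt k) (Wm 0))"
    by (rule comm_qcomm_jacobi[OF hom])
  also have "\<dots> = phi (rho q) * (comm (Wm 0) (Wp (Suc k)) + comm (Wp 0) (Wm (Suc k))
      - comm (Wm 0) (Wm k) - comm (Wp 0) (Wp k))"
    by (simp add: qcomm_Wp0_Gt qcomm_Gt_Wm0 comm_def algebra_simps central_field_hom_simps[OF hom])
  also have "\<dots> = 0"
    by (simp add: comm_Wm_Wp_swap comm_Wm_Wm comm_Wp_Wp)
  finally show ?thesis .
qed

lemma G_eq: "G k = Gt k - phi (q + inverse q) * comm (Wm 0) (Wp k)"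
proof -
  have "phi (q + inverse q) * comm (Wm 0) (Wp k) = Gt k - G k"
    by (simp add: comm_Wm0_Wp mult.assoc[symmetric] mult.commute[of "q + inverse q"]
        central_field_hom_mult[OF hom, symmetric] q_add_inverse_nonzero central_field_hom_one[OF hom])
  then show ?thesis by simp
qed

lemma gen_subalg_subset_centralizer_Z: "gen_subalg phi Wm Wp G Gt \<subseteq> centralizer Z"
proof (rule gen_subalg_subset)
  show Wm: "Wm k \<in> centralizer Z" and Wp: "Wp k \<in> centralizer Z" and Gt: "Gt k \<in> centralizer Z" for k
    by (simp_all add: centralizer_iff_comm comm_Wm_Z comm_Wp_Z comm_Gt_Z)
  show scalar: "phi c \<in> centralizer Z" for c
    by (simp add: centralizer_def central_field_hom_commute[OF hom])
  show "G k \<in> centralizer Z" for k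
    unfolding G_eq comm_def
    by (intro centralizer_diff centralizer_mult Wm Wp Gt scalar)
qed (simp_all add: centralizer_add centralizer_mult)

end

theorem lemma11p3:
  fixes phi :: "'f::field \<Rightarrow> 'a::ring_1" and q :: 'f
    and Wm Wp G Gt :: "nat \<Rightarrow> 'a"
  assumes "central_field_hom phi"
    and "q \<noteq> 0" and "\<forall>n::nat. n > 0 \<longrightarrow> q ^ n \<noteq> 1"
    and "Oq_relations phi q Wm Wp G Gt"
  shows "\<forall>x \<in> gen_subalg phi Wm Wp G Gt.
           (let B = phi (inverse q ^ 2) * Wp 0 * Wm 0 - Wm 0 * Wp 0;
                z = Gt 0 + phi q * B
            in z * x = x * z)"
proof -
  have "q ^ 2 \<noteq> -1"
  proof
    assume "q ^ 2 = -1"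
    then have "q ^ 4 = 1"
      using power_mult[of q 2 2] by simp
    with assms(3) show False
      by auto
  qed
  then interpret Oq_rep phi q Wm Wp G Gt
    using assms add_inverse_eq_0_iff by unfold_locales auto
  show ?thesis
    using gen_subalg_subset_centralizer_Z unfolding Let_def Z_eq centralizer_def by blast
qed

end
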